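(* Let $j\in\mathbb Z$ and let $\lambda$ be a partition with an addable node $\mathfrak l$ in column $j$, and let $\lambda^+=\lambda\cup\{\mathfrak l\}$. Then \[F(\lambda^+)+\sum_{x\in X_\lambda}F(\lambda^{[x]})=2F(\lambda).\]
   Context: Partitions are identified with Young diagrams $\{(a,b)\in\mathbb N^2:b\le\lambda_a\}$; nodes are elements of $\mathbb N^2$; $(a,b)$ has height $\operatorname{ht}(a,b)=a+b$ and lies in column $b-a$. Addable node: a node not in $\lambda$ whose addition gives a partition; removable node: a node of $\lambda$ whose removal gives a partition. $X_\lambda$ (relative to $\mathfrak l$) is the set of integers $x$ such that $\lambda$ has a removable node $\mathfrak n$ in column $j+x$ with $\operatorname{ht}(\mathfrak n)=\operatorname{ht}(\mathfrak l)-1$ and $\operatorname{ht}(\mathfrak p)<\operatorname{ht}(\mathfrak l)$ for all nodes $\mathfrak p\in\lambda$ in all columns strictly between $j$ and $j+x$. For $x\in X_\lambda$ with $x>0$, $\lambda^{[x]}$ is obtained from $\lambda$ by removing the highest node of $\lambda$ in each of columns $j+1,\dots,j+x$; for $x<0$, by removing the highest node in each of columns $j+x,\dots,j-1$. The function $F$ is defined recursively: $F(\varnothing)=1$; for $\lambda\ne\varnothing$ choose a node $(a,b)$ of $\lambda$ with $a+b$ maximal, and set $F(\lambda)=\binom{a+b}{a}F((\lambda_{a+1},\lambda_{a+2},\dots))\,F((\max\{\lambda_1-b,0\},\max\{\lambda_2-b,0\},\dots))$; this is independent of the choice of $(a,b)$. *)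

theory Defs
  imports Main
begin

text \<open>Nodes are pairs (a,b) of positive naturals (row a, column-index b).
  A partition is identified with its (finite) Young diagram
  {(a,b). 1 \<le> a, 1 \<le> b \<le> lambda_a}.\<close>

type_synonym node = "nat \<times> nat"

definition is_partition :: "node set \<Rightarrow> bool" where
  "is_partition D \<longleftrightarrow> finite D \<and>
     (\<forall>(a,b)\<in>D. 1 \<le> a \<and> 1 \<le> b \<and>
        (\<forall>a' b'. 1 \<le> a' \<and> a' \<le> a \<and> 1 \<le> b' \<and> b' \<le> b \<longrightarrow> (a',b') \<in> D))"

definition ht :: "node \<Rightarrow> nat" where
  "ht n = fst n + snd n"

definition col :: "node \<Rightarrow> int" where
  "col n = int (snd n) - int (fst n)"

definition addable :: "node set \<Rightarrow> node \<Rightarrow> bool" where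
  "addable D n \<longleftrightarrow> n \<notin> D \<and> is_partition (insert n D)"

definition removable :: "node set \<Rightarrow> node \<Rightarrow> bool" where
  "removable D n \<longleftrightarrow> n \<in> D \<and> is_partition (D - {n})"

definition rows_below :: "node set \<Rightarrow> nat \<Rightarrow> node set" where
  "rows_below D a = (\<lambda>(x,y). (x - a, y)) ` {p \<in> D. fst p > a}"

definition cols_right :: "node set \<Rightarrow> nat \<Rightarrow> node set" where
  "cols_right D b = (\<lambda>(x,y). (x, y - b)) ` {p \<in> D. snd p > b}"

definition top_node :: "node set \<Rightarrow> node" where
  "top_node D = (SOME n. n \<in> D \<and> (\<forall>m\<in>D. ht m \<le> ht n))"

lemma top_node_prop:
  assumes "finite D" "D \<noteq> {}"
  shows "top_node D \<in> D \<and> (\<forall>m\<in>D. ht m \<le> ht (top_node D))"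
proof -
  obtain n where "n \<in> D" "ht n = Max (ht ` D)"
    using assms by (metis (mono_tags, lifting) Max_in finite_imageI image_iff image_is_empty)
  then have "\<exists>n. n \<in> D \<and> (\<forall>m\<in>D. ht m \<le> ht n)"
    using assms by (metis Max_ge finite_imageI imageI)
  then show ?thesis unfolding top_node_def by (rule someI_ex)
qed

lemma card_rows_below_less:
  assumes "finite D" "(a,b) \<in> D"
  shows "card (rows_below D a) < card D"
proof -
  have "card (rows_below D a) \<le> card {p \<in> D. fst p > a}"
    unfolding rows_below_def by (rule card_image_le) (use assms in auto)
  also have "\<dots> < card D"
    by (rule psubset_card_mono) (use assms in force)+
  finally show ?thesis .
qed

lemma card_cols_right_less:
  assumes "finite D" "(a,b) \<in> D"
  shows "card (cols_right D b) < card D"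
proof -
  have "card (cols_right D b) \<le> card {p \<in> D. snd p > b}"
    unfolding cols_right_def by (rule card_image_le) (use assms in auto)
  also have "\<dots> < card D"
    by (rule psubset_card_mono) (use assms in force)+
  finally show ?thesis .
qed

function F :: "node set \<Rightarrow> nat" where
  "F D = (if \<not> is_partition D \<or> D = {} then 1
          else ((fst (top_node D) + snd (top_node D)) choose fst (top_node D))
               * F (rows_below D (fst (top_node D)))
               * F (cols_right D (snd (top_node D))))"
  by pat_completeness auto
termination
proof (relation "measure card")
  show "wf (measure card)" by simp
next
  fix D :: "node set"
  assume "\<not> (\<not> is_partition D \<or> D = {})"
  then have f: "finite D" and ne: "D \<noteq> {}" by (auto simp: is_partition_def)
  then have "top_node D \<in> D" using top_node_prop by blast
  then have "(fst (top_node D), snd (top_node D)) \<in> D" by simp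
  then show "(rows_below D (fst (top_node D)), D) \<in> measure card"
    and "(cols_right D (snd (top_node D)), D) \<in> measure card"
    using card_rows_below_less[OF f] card_cols_right_less[OF f] by (metis in_measure)+
qed

declare F.simps [simp del]

definition Xset :: "node set \<Rightarrow> node \<Rightarrow> int set" where
  "Xset D l = {x. \<exists>n. removable D n \<and> col n = col l + x \<and> ht n + 1 = ht l \<and>
      (\<forall>p\<in>D. min (col l) (col l + x) < col p \<and> col p < max (col l) (col l + x)
               \<longrightarrow> ht p < ht l)}"

definition highest_in_col :: "node set \<Rightarrow> int \<Rightarrow> node set" where
  "highest_in_col D c = {p \<in> D. col p = c \<and> (\<forall>q\<in>D. col q = c \<longrightarrow> ht q \<le> ht p)}"

definition bracket :: "node set \<Rightarrow> int \<Rightarrow> int \<Rightarrow> node set" where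
  "bracket D j x =
     (if x > 0 then D - (\<Union>c\<in>{j+1..j+x}. highest_in_col D c)
      else if x < 0 then D - (\<Union>c\<in>{j+x..j-1}. highest_in_col D c)
      else D)"

end

theory Submission
  imports Defs
begin

text \<open>
  F may be split at any node of maximal height, not only at the chosen one. If some node (a,b)
  of \<lambda> is at least as high as the added node (r,c), then a < r or, after conjugating, b < c;
  splitting at (a,b) multiplies F(\<lambda>+), F(\<lambda>) and every F(\<lambda>[x]) by the same factor
  (a+b choose a) F(cols_right \<lambda> b), and the identity descends to rows_below \<lambda> a.
  Otherwise (r,c) lies above all nodes. Then the terms with x < 0 reduce, by splitting at
  (r-1,c), to the case r = 1, where their sum is (c-1) F(rows_below \<lambda> 1); this is proved by
  induction, splitting off the columns right of the lowest node of maximal height. The terms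
  with x > 0 are the same computation for the conjugate partition, and what remains is an
  identity between binomial coefficients.
\<close>

lemma ht_Pair [simp]: "ht (a,b) = a + b"
  by (simp add: ht_def)

lemma col_Pair [simp]: "col (a,b) = int b - int a"
  by (simp add: col_def)

lemma mem_rows_below [simp]: "(x,y) \<in> rows_below D a \<longleftrightarrow> 0 < x \<and> (x+a,y) \<in> D"
  unfolding rows_below_def by (auto simp: image_iff)

lemma mem_cols_right [simp]: "(x,y) \<in> cols_right D b \<longleftrightarrow> 0 < y \<and> (x,y+b) \<in> D"
  unfolding cols_right_def by (auto simp: image_iff)

lemma pair_set_eqI: "(\<And>u v. (u,v) \<in> A \<longleftrightarrow> (u,v) \<in> B) \<Longrightarrow> A = B"
  by auto

lemma is_partition_finite: "is_partition D \<Longrightarrow> finite D"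
  by (simp add: is_partition_def)

lemma is_partition_pos: "is_partition D \<Longrightarrow> (a,b) \<in> D \<Longrightarrow> 1 \<le> a \<and> 1 \<le> b"
  unfolding is_partition_def by blast

lemma is_partition_downward_closed:
  "is_partition D \<Longrightarrow> (a,b) \<in> D \<Longrightarrow> 1 \<le> a' \<Longrightarrow> a' \<le> a \<Longrightarrow> 1 \<le> b' \<Longrightarrow> b' \<le> b \<Longrightarrow> (a',b') \<in> D"
  unfolding is_partition_def by blast

lemma is_partitionI:
  assumes fin: "finite D"
    and pos: "\<And>a b. (a,b) \<in> D \<Longrightarrow> 1 \<le> a \<and> 1 \<le> b"
    and up: "\<And>a b. (a,b) \<in> D \<Longrightarrow> 1 < a \<Longrightarrow> (a-1,b) \<in> D"
    and left: "\<And>a b. (a,b) \<in> D \<Longrightarrow> 1 < b \<Longrightarrow> (a,b-1) \<in> D"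
  shows "is_partition D"
proof -
  have up_closed: "(a-d,b) \<in> D" if "(a,b) \<in> D" "d < a" for a b d
    using that by (induction d) (auto dest: up simp: diff_Suc)
  have left_closed: "(a,b-d) \<in> D" if "(a,b) \<in> D" "d < b" for a b d
    using that by (induction d) (auto dest: left simp: diff_Suc)
  have "(a',b') \<in> D" if "(a,b) \<in> D" "1 \<le> a'" "a' \<le> a" "1 \<le> b'" "b' \<le> b" for a b a' b'
    using up_closed[OF that(1), of "a-a'"] left_closed[of a' b "b-b'"] that by simp
  then show ?thesis
    unfolding is_partition_def using fin pos by fast
qed

lemma is_partition_rows_below: "is_partition D \<Longrightarrow> is_partition (rows_below D a)"
  apply (rule is_partitionI)
     apply (simp add: rows_below_def is_partition_finite)
  subgoal by (auto dest: is_partition_pos)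
  subgoal for x y
    using is_partition_pos[of D "x+a" y] is_partition_downward_closed[of D "x+a" y "x-1+a" y] by auto
  subgoal for x y
    using is_partition_pos[of D "x+a" y] is_partition_downward_closed[of D "x+a" y "x+a" "y-1"] by auto
  done

lemma is_partition_cols_right: "is_partition D \<Longrightarrow> is_partition (cols_right D b)"
  apply (rule is_partitionI)
     apply (simp add: cols_right_def is_partition_finite)
  subgoal by (auto dest: is_partition_pos)
  subgoal for x y
    using is_partition_pos[of D x "y+b"] is_partition_downward_closed[of D x "y+b" "x-1" "y+b"] by auto
  subgoal for x y
    using is_partition_pos[of D x "y+b"] is_partition_downward_closed[of D x "y+b" x "y-1+b"] by auto
  done

lemma rows_below_rows_below: "rows_below (rows_below D a) a' = rows_below D (a' + a)"
  by (auto simp: set_eq_iff add.assoc)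

lemma cols_right_cols_right: "cols_right (cols_right D b) b' = cols_right D (b' + b)"
  by (auto simp: set_eq_iff add.assoc)

lemma cols_right_rows_below: "cols_right (rows_below D a) b = rows_below (cols_right D b) a"
  by (auto simp: set_eq_iff)

lemma cols_right_0: "is_partition D \<Longrightarrow> cols_right D 0 = D"
  by (rule pair_set_eqI) (auto dest: is_partition_pos)

lemma cols_right_eq_empty:
  assumes "is_partition D" and "\<forall>p\<in>D. ht p \<le> b + 1"
  shows "cols_right D b = {}"
  using assms by (fastforce simp: cols_right_def dest: is_partition_pos)

lemma rows_below_eq_empty:
  assumes "is_partition D" and "\<forall>p\<in>D. ht p \<le> a + 1"
  shows "rows_below D a = {}"
  using assms by (fastforce simp: rows_below_def dest: is_partition_pos)

lemma removable_iff:
  assumes P: "is_partition D"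
  shows "removable D (a,b) \<longleftrightarrow> (a,b) \<in> D \<and> (a+1,b) \<notin> D \<and> (a,b+1) \<notin> D"
proof
  assume "removable D (a,b)"
  then have ab: "(a,b) \<in> D" and P': "is_partition (D - {(a,b)})"
    unfolding removable_def by auto
  have "(a,b) \<in> D - {(a,b)}" if "(a',b') \<in> D" "(a',b') \<noteq> (a,b)" "a \<le> a'" "b \<le> b'" for a' b'
    using is_partition_downward_closed[OF P', of a' b' a b] is_partition_pos[OF P ab] that by simp
  then show "(a,b) \<in> D \<and> (a+1,b) \<notin> D \<and> (a,b+1) \<notin> D"
    using ab by (metis Diff_iff insertI1 le_add1 order_refl prod.inject n_not_Suc_n Suc_eq_plus1)
next
  assume h: "(a,b) \<in> D \<and> (a+1,b) \<notin> D \<and> (a,b+1) \<notin> D"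
  have "is_partition (D - {(a,b)})"
  proof (rule is_partitionI)
    show "finite (D - {(a,b)})"
      using is_partition_finite[OF P] by simp
    show "1 \<le> x \<and> 1 \<le> y" if "(x,y) \<in> D - {(a,b)}" for x y
      using is_partition_pos[OF P] that by blast
    show "(x-1,y) \<in> D - {(a,b)}" if "(x,y) \<in> D - {(a,b)}" "1 < x" for x y
      using is_partition_downward_closed[OF P, of x y "x-1" y] is_partition_pos[OF P, of x y] that h
      by (cases "x = a + 1") auto
    show "(x,y-1) \<in> D - {(a,b)}" if "(x,y) \<in> D - {(a,b)}" "1 < y" for x y
      using is_partition_downward_closed[OF P, of x y x "y-1"] is_partition_pos[OF P, of x y] that h
      by (cases "y = b + 1") auto
  qed
  then show "removable D (a,b)"
    unfolding removable_def using h by simp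
qed

lemma addable_iff:
  assumes P: "is_partition D"
  shows "addable D (r,c) \<longleftrightarrow>
    (r,c) \<notin> D \<and> 1 \<le> r \<and> 1 \<le> c \<and> (1 < r \<longrightarrow> (r-1,c) \<in> D) \<and> (1 < c \<longrightarrow> (r,c-1) \<in> D)"
proof
  assume "addable D (r,c)"
  then have rc: "(r,c) \<notin> D" and P': "is_partition (insert (r,c) D)"
    unfolding addable_def by auto
  have pos: "1 \<le> r \<and> 1 \<le> c"
    using is_partition_pos[OF P', of r c] by simp
  have "(r-1,c) \<in> D" if "1 < r"
    using is_partition_downward_closed[OF P', of r c "r-1" c] pos that by (force simp: Suc_le_eq)
  moreover have "(r,c-1) \<in> D" if "1 < c"
    using is_partition_downward_closed[OF P', of r c r "c-1"] pos that by (force simp: Suc_le_eq)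
  ultimately show "(r,c) \<notin> D \<and> 1 \<le> r \<and> 1 \<le> c \<and> (1 < r \<longrightarrow> (r-1,c) \<in> D) \<and> (1 < c \<longrightarrow> (r,c-1) \<in> D)"
    using rc pos by blast
next
  assume h: "(r,c) \<notin> D \<and> 1 \<le> r \<and> 1 \<le> c \<and> (1 < r \<longrightarrow> (r-1,c) \<in> D) \<and> (1 < c \<longrightarrow> (r,c-1) \<in> D)"
  have "is_partition (insert (r,c) D)"
  proof (rule is_partitionI)
    show "finite (insert (r,c) D)"
      using is_partition_finite[OF P] by simp
    show "1 \<le> x \<and> 1 \<le> y" if "(x,y) \<in> insert (r,c) D" for x y
      using is_partition_pos[OF P] that h by blast
    show "(x-1,y) \<in> insert (r,c) D" if "(x,y) \<in> insert (r,c) D" "1 < x" for x y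
    proof (cases "(x,y) = (r,c)")
      case False
      then have "(x,y) \<in> D"
        using that by auto
      then show ?thesis
        using is_partition_downward_closed[OF P, of x y "x-1" y] is_partition_pos[OF P, of x y] that
        by force
    qed (use h that in auto)
    show "(x,y-1) \<in> insert (r,c) D" if "(x,y) \<in> insert (r,c) D" "1 < y" for x y
    proof (cases "(x,y) = (r,c)")
      case False
      then have "(x,y) \<in> D"
        using that by auto
      then show ?thesis
        using is_partition_downward_closed[OF P, of x y x "y-1"] is_partition_pos[OF P, of x y] that
        by force
    qed (use h that in auto)
  qed
  then show "addable D (r,c)"
    unfolding addable_def using h by simp
qed

lemma highest_in_col_iff:
  assumes P: "is_partition D"
  shows "(a,b) \<in> highest_in_col D k \<longleftrightarrow> (a,b) \<in> D \<and> int b - int a = k \<and> (a+1,b+1) \<notin> D"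
proof
  assume "(a,b) \<in> highest_in_col D k"
  then show "(a,b) \<in> D \<and> int b - int a = k \<and> (a+1,b+1) \<notin> D"
    unfolding highest_in_col_def by fastforce
next
  assume h: "(a,b) \<in> D \<and> int b - int a = k \<and> (a+1,b+1) \<notin> D"
  have "u + v \<le> a + b" if "(u,v) \<in> D" "int v - int u = k" for u v
    using h that is_partition_downward_closed[OF P that(1), of "a+1" "b+1"]
    by (cases "a < u") auto
  then show "(a,b) \<in> highest_in_col D k"
    unfolding highest_in_col_def using h by auto
qed

lemma same_col_no_diagonal_successor_unique:
  assumes P: "is_partition D" and "(a,b) \<in> D" "(a',b') \<in> D" "int b - int a = int b' - int a'"
    and "(a+1,b+1) \<notin> D" "(a'+1,b'+1) \<notin> D"
  shows "a = a' \<and> b = b'"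
  using assms is_partition_downward_closed[OF P, of a b "a'+1" "b'+1"]
    is_partition_downward_closed[OF P, of a' b' "a+1" "b+1"]
  by (cases a a' rule: linorder_cases) auto

lemma addable_col_node_successors:
  assumes P: "is_partition D" and A: "addable D (r,c)"
    and uv: "(u,v) \<in> D" "int v - int u = int c - int r"
  shows "(u+1,v) \<in> D \<and> (u,v+1) \<in> D"
proof -
  have a: "(r,c) \<notin> D" "1 \<le> r" "1 \<le> c" "1 < r \<longrightarrow> (r-1,c) \<in> D" "1 < c \<longrightarrow> (r,c-1) \<in> D"
    using A addable_iff[OF P] by auto
  have "1 \<le> u" "1 \<le> v"
    using is_partition_pos[OF P uv(1)] by auto
  moreover have "u < r"
    using is_partition_downward_closed[OF P uv(1), of r c] a uv(2) by (cases "u < r") auto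
  ultimately show ?thesis
    using is_partition_downward_closed[OF P, of r "c-1" "u+1" v]
      is_partition_downward_closed[OF P, of "r-1" c u "v+1"] a uv(2) by auto
qed

lemma ht_rows_below_le: "\<forall>p\<in>D. ht p \<le> n \<Longrightarrow> p \<in> rows_below D a \<Longrightarrow> ht p + a \<le> n"
  by (auto simp: rows_below_def)

lemma ht_cols_right_le: "\<forall>p\<in>D. ht p \<le> n \<Longrightarrow> p \<in> cols_right D b \<Longrightarrow> ht p + b \<le> n"
  by (auto simp: cols_right_def)

lemma F_empty [simp]: "F {} = 1"
  by (simp add: F.simps)

lemma F_eq_at_highest:
  assumes "is_partition D" "(a,b) \<in> D" "\<forall>p\<in>D. ht p \<le> a + b"
  shows "F D = ((a+b) choose a) * F (rows_below D a) * F (cols_right D b)"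
  using assms
proof (induction "card D" arbitrary: D a b rule: less_induct)
  case less
  note P = less.prems(1) and H = less.prems(3)
  have fin: "finite D"
    using is_partition_finite[OF P] .
  define E where "E a b = ((a+b) choose a) * F (rows_below D a) * F (cols_right D b)" for a b
  \<comment> \<open>Splitting at either of two highest nodes, both sides split further at the other one
      into the same three pieces.\<close>
  have swap: "E a1 b1 = E a2 b2"
    if h: "(a1,b1) \<in> D" "(a2,b2) \<in> D" "a1 + b1 = a + b" "a2 + b2 = a + b" "a1 < a2" for a1 b1 a2 b2
  proof -
    have m1: "(a2-a1, b2) \<in> rows_below D a1" and m2: "(a1, b1-b2) \<in> cols_right D b2"
      using h by auto
    have hm1: "\<forall>p\<in>rows_below D a1. ht p \<le> (a2-a1) + b2"
      using ht_rows_below_le[OF H] h by fastforce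
    have hm2: "\<forall>p\<in>cols_right D b2. ht p \<le> a1 + (b1-b2)"
      using ht_cols_right_le[OF H] h by fastforce
    have F1: "F (rows_below D a1) = ((a2-a1+b2) choose (a2-a1)) * F (rows_below D a2)
        * F (cols_right (rows_below D a1) b2)"
      using less.hyps[OF card_rows_below_less[OF fin h(1)] is_partition_rows_below[OF P] m1 hm1]
        rows_below_rows_below[of D a1 "a2-a1"] h(5) by simp
    have F2: "F (cols_right D b2) = ((a1+(b1-b2)) choose a1) * F (cols_right (rows_below D a1) b2)
        * F (cols_right D b1)"
      using less.hyps[OF card_cols_right_less[OF fin h(2)] is_partition_cols_right[OF P] m2 hm2]
        cols_right_cols_right[of D b2 "b1-b2"] h cols_right_rows_below by simp
    have q: "a1 + (b1-b2) = a2" "a2 - a1 + b2 = (a2+b2) - a1" "a1 + b1 = a2 + b2"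
      using h by auto
    have "((a1+b1) choose a1) * ((a2-a1+b2) choose (a2-a1)) = ((a2+b2) choose a2) * ((a1+(b1-b2)) choose a1)"
      unfolding q using choose_mult[of a1 a2 "a2+b2"] h by (simp add: mult.commute)
    then show ?thesis
      unfolding E_def F1 F2 by (simp add: mult_ac)
  qed
  obtain a0 b0 where t: "top_node D = (a0,b0)"
    by (cases "top_node D")
  have tp: "(a0,b0) \<in> D" "\<forall>m\<in>D. ht m \<le> a0 + b0"
    using top_node_prop[OF fin] less.prems(2) t by auto
  then have h0: "a0 + b0 = a + b"
    using H less.prems(2) by fastforce
  have "F D = E a0 b0"
    unfolding E_def using F.simps[of D] P tp t by auto
  also have "\<dots> = E a b"
    using swap[OF tp(1) less.prems(2) h0] swap[OF less.prems(2) tp(1) refl h0] h0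
    by (cases a0 a rule: linorder_cases) auto
  finally show ?case
    unfolding E_def .
qed

lemma F_eq_first_row:
  assumes P: "is_partition D" and "1 \<le> k \<Longrightarrow> (1,k) \<in> D" and H: "\<forall>p\<in>D. ht p \<le> k + 1"
  shows "F D = (k+1) * F (rows_below D 1)"
proof (cases "k = 0")
  case True
  then have "D = {}"
    using H is_partition_pos[OF P] by fastforce
  then show ?thesis
    using True by (simp add: rows_below_def)
next
  case False
  have "F D = ((1+k) choose 1) * F (rows_below D 1) * F (cols_right D k)"
    by (rule F_eq_at_highest) (use assms False in auto)
  then show ?thesis
    using cols_right_eq_empty[OF P, of k] H by simp
qed

lemma first_row_binomial_identity:
  assumes "1 \<le> a"
  shows "(a+b) * (((a+b-1) choose a) + (a-1) * ((a+b) choose a)) = (a+b-1) * (a * ((a+b) choose a))"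
proof -
  have "(a+b) * (((a+b-1) choose a) + (a-1) * ((a+b) choose a))
      = (a+b) * ((a+b-1) choose a) + (a+b) * (a-1) * ((a+b) choose a)"
    by (simp add: distrib_left)
  also have "\<dots> = (b + (a+b) * (a-1)) * ((a+b) choose a)"
    using binomial_absorb_comp[of "a+b" a] by (simp add: distrib_right)
  also have "b + (a+b) * (a-1) = (a+b-1) * a"
    using assms by (cases a) (auto simp: algebra_simps)
  finally show ?thesis
    by (simp add: mult.assoc)
qed

section \<open>The partitions obtained by removing a rim segment\<close>

definition bracket_cols :: "int \<Rightarrow> int \<Rightarrow> int set" where
  "bracket_cols j x = (if x > 0 then {j+1..j+x} else if x < 0 then {j+x..j-1} else {})"

lemma mem_bracket_cols:
  "k \<in> bracket_cols j x \<longleftrightarrow> (0 < x \<and> j < k \<and> k \<le> j + x) \<or> (x < 0 \<and> j + x \<le> k \<and> k < j)"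
  unfolding bracket_cols_def by auto

lemma mem_bracket:
  assumes "is_partition D"
  shows "(a,b) \<in> bracket D j x \<longleftrightarrow>
    (a,b) \<in> D \<and> \<not> (int b - int a \<in> bracket_cols j x \<and> (a+1,b+1) \<notin> D)"
proof -
  have "bracket D j x = D - (\<Union>k\<in>bracket_cols j x. highest_in_col D k)"
    unfolding bracket_def bracket_cols_def by auto
  then show ?thesis
    by (auto simp: highest_in_col_iff[OF assms])
qed

lemma bracket_subset: "bracket D j x \<subseteq> D"
  unfolding bracket_def by auto

lemma bracket_eq_self:
  assumes "is_partition D" and "\<And>u v. (u,v) \<in> D \<Longrightarrow> int v - int u \<notin> bracket_cols j x"
  shows "bracket D j x = D"
  by (rule pair_set_eqI) (auto simp: mem_bracket assms)

lemma rows_below_bracket: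
  assumes P: "is_partition D"
  shows "rows_below (bracket D j x) a = bracket (rows_below D a) (j + int a) x"
proof (rule pair_set_eqI)
  fix u v
  have "int v - int u \<in> bracket_cols (j + int a) x \<longleftrightarrow> int v - int (u+a) \<in> bracket_cols j x"
    by (simp add: mem_bracket_cols) arith
  then show "(u,v) \<in> rows_below (bracket D j x) a \<longleftrightarrow> (u,v) \<in> bracket (rows_below D a) (j + int a) x"
    unfolding mem_rows_below mem_bracket[OF P] mem_bracket[OF is_partition_rows_below[OF P]]
    by (simp add: add_ac)
qed

lemma cols_right_bracket:
  assumes P: "is_partition D"
  shows "cols_right (bracket D j x) b = bracket (cols_right D b) (j - int b) x"
proof (rule pair_set_eqI)
  fix u v
  have "int v - int u \<in> bracket_cols (j - int b) x \<longleftrightarrow> int (v+b) - int u \<in> bracket_cols j x"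
    by (simp add: mem_bracket_cols) arith
  then show "(u,v) \<in> cols_right (bracket D j x) b \<longleftrightarrow> (u,v) \<in> bracket (cols_right D b) (j - int b) x"
    unfolding mem_cols_right mem_bracket[OF P] mem_bracket[OF is_partition_cols_right[OF P]]
    by (simp add: add_ac)
qed

lemma Xset_iff:
  "x \<in> Xset D l \<longleftrightarrow> (\<exists>a b. removable D (a,b) \<and> int b - int a = col l + x \<and> a + b + 1 = ht l \<and>
    (\<forall>u v. (u,v) \<in> D \<longrightarrow> min (col l) (col l + x) < int v - int u \<and>
      int v - int u < max (col l) (col l + x) \<longrightarrow> u + v < ht l))"
  unfolding Xset_def mem_Collect_eq split_paired_Ex Ball_def split_paired_All by simp

lemma finite_Xset: "finite D \<Longrightarrow> finite (Xset D l)"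
proof -
  assume "finite D"
  moreover have "Xset D l \<subseteq> (\<lambda>n. col n - col l) ` D"
    unfolding Xset_def removable_def by force
  ultimately show ?thesis
    using finite_subset by blast
qed

lemma zero_notin_Xset: "0 \<notin> Xset D l"
  unfolding Xset_def by (cases l) (auto simp: ht_def col_def, presburger)

lemma mem_Xset_if_all_lower:
  assumes P: "is_partition D" and H: "\<forall>p\<in>D. ht p < r + c"
  shows "x \<in> Xset D (r,c) \<longleftrightarrow>
    (\<exists>u v. (u,v) \<in> D \<and> u + v + 1 = r + c \<and> x = (int v - int u) - (int c - int r))"
proof
  assume "x \<in> Xset D (r,c)"
  then show "\<exists>u v. (u,v) \<in> D \<and> u + v + 1 = r + c \<and> x = (int v - int u) - (int c - int r)"
    unfolding Xset_iff removable_def by force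
next
  assume "\<exists>u v. (u,v) \<in> D \<and> u + v + 1 = r + c \<and> x = (int v - int u) - (int c - int r)"
  then obtain u v where uv: "(u,v) \<in> D" "u + v + 1 = r + c" "x = (int v - int u) - (int c - int r)"
    by blast
  then have "removable D (u,v)"
    using removable_iff[OF P] H by fastforce
  then show "x \<in> Xset D (r,c)"
    unfolding Xset_iff using uv H by force
qed

section \<open>Conjugation\<close>

definition conjugate :: "node set \<Rightarrow> node set" where
  "conjugate D = prod.swap ` D"

lemma mem_conjugate [simp]: "(u,v) \<in> conjugate D \<longleftrightarrow> (v,u) \<in> D"
  unfolding conjugate_def by force

lemma conjugate_conjugate [simp]: "conjugate (conjugate D) = D"
  by (rule pair_set_eqI) simp

lemma conjugate_insert: "conjugate (insert (r,c) D) = insert (c,r) (conjugate D)"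
  by (rule pair_set_eqI) auto

lemma card_conjugate: "card (conjugate D) = card D"
  unfolding conjugate_def by (simp add: card_image)

lemma ht_conjugate_le: "\<forall>p\<in>D. ht p \<le> n \<Longrightarrow> \<forall>p\<in>conjugate D. ht p \<le> n"
  unfolding conjugate_def by auto

lemma ht_conjugate_less: "\<forall>p\<in>D. ht p < n \<Longrightarrow> \<forall>p\<in>conjugate D. ht p < n"
  unfolding conjugate_def by auto

lemma is_partition_conjugate: "is_partition D \<Longrightarrow> is_partition (conjugate D)"
  apply (rule is_partitionI)
     apply (simp add: conjugate_def is_partition_finite)
  subgoal for u v using is_partition_pos[of D v u] by simp
  subgoal for u v using is_partition_pos[of D v u] is_partition_downward_closed[of D v u v "u-1"] by simp
  subgoal for u v using is_partition_pos[of D v u] is_partition_downward_closed[of D v u "v-1" u] by simp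
  done

lemma rows_below_conjugate: "rows_below (conjugate D) a = conjugate (cols_right D a)"
  by (rule pair_set_eqI) simp

lemma cols_right_conjugate: "cols_right (conjugate D) b = conjugate (rows_below D b)"
  by (rule pair_set_eqI) simp

lemma F_conjugate: "is_partition D \<Longrightarrow> F (conjugate D) = F D"
proof (induction "card D" arbitrary: D rule: less_induct)
  case less
  note P = less.prems
  show ?case
  proof (cases "D = {}")
    case True
    then show ?thesis
      by (simp add: conjugate_def)
  next
    case False
    have fin: "finite D"
      using is_partition_finite[OF P] .
    obtain a b where t: "top_node D = (a,b)"
      by (cases "top_node D")
    have tp: "(a,b) \<in> D" "\<forall>m\<in>D. ht m \<le> a + b"
      using top_node_prop[OF fin False] t by auto
    have "F (conjugate D) = ((b+a) choose b) * F (conjugate (cols_right D b)) * F (conjugate (rows_below D a))"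
      using F_eq_at_highest[OF is_partition_conjugate[OF P], of b a] tp ht_conjugate_le[OF tp(2)]
      by (simp add: add.commute rows_below_conjugate cols_right_conjugate)
    also have "\<dots> = ((a+b) choose a) * F (rows_below D a) * F (cols_right D b)"
      using less.hyps[OF card_cols_right_less[OF fin tp(1)] is_partition_cols_right[OF P]]
        less.hyps[OF card_rows_below_less[OF fin tp(1)] is_partition_rows_below[OF P]]
        binomial_symmetric[of b "a+b"] by (simp add: add.commute)
    also have "\<dots> = F D"
      using F_eq_at_highest[OF P tp] by simp
    finally show ?thesis .
  qed
qed

lemma addable_conjugate:
  "is_partition D \<Longrightarrow> addable (conjugate D) (c,r) \<longleftrightarrow> addable D (r,c)"
  by (auto simp: addable_iff is_partition_conjugate)

lemma removable_conjugate:
  "is_partition D \<Longrightarrow> removable (conjugate D) (b,a) \<longleftrightarrow> removable D (a,b)"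
  by (auto simp: removable_iff is_partition_conjugate)

lemma bracket_conjugate:
  assumes P: "is_partition D"
  shows "bracket (conjugate D) (-j) (-x) = conjugate (bracket D j x)"
proof (rule pair_set_eqI)
  fix u v
  have "int v - int u \<in> bracket_cols (-j) (-x) \<longleftrightarrow> int u - int v \<in> bracket_cols j x"
    by (auto simp: mem_bracket_cols)
  then show "(u,v) \<in> bracket (conjugate D) (-j) (-x) \<longleftrightarrow> (u,v) \<in> conjugate (bracket D j x)"
    unfolding mem_conjugate mem_bracket[OF P] mem_bracket[OF is_partition_conjugate[OF P]] by simp
qed

lemma uminus_in_Xset_conjugate:
  assumes P: "is_partition D" and x: "x \<in> Xset D (r,c)"
  shows "-x \<in> Xset (conjugate D) (c,r)"
proof -
  obtain a b where h: "removable D (a,b)" "int b - int a = col (r,c) + x" "a + b + 1 = ht (r,c)"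
    "\<forall>u v. (u,v) \<in> D \<longrightarrow> min (col (r,c)) (col (r,c) + x) < int v - int u \<and>
      int v - int u < max (col (r,c)) (col (r,c) + x) \<longrightarrow> u + v < ht (r,c)"
    using x unfolding Xset_iff by blast
  have "removable (conjugate D) (b,a)"
    using h(1) removable_conjugate[OF P] by simp
  moreover have "\<forall>u v. (u,v) \<in> conjugate D \<longrightarrow> min (col (c,r)) (col (c,r) + -x) < int v - int u \<and>
      int v - int u < max (col (c,r)) (col (c,r) + -x) \<longrightarrow> u + v < ht (c,r)"
  proof (intro allI impI)
    fix u v
    assume "(u,v) \<in> conjugate D" "min (col (c,r)) (col (c,r) + -x) < int v - int u \<and>
      int v - int u < max (col (c,r)) (col (c,r) + -x)"
    then have "min (col (r,c)) (col (r,c) + x) < int u - int v \<and> int u - int v < max (col (r,c)) (col (r,c) + x)"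
      by (simp add: min_def max_def split: if_splits)
    then have "v + u < ht (r,c)"
      using h(4) \<open>(u,v) \<in> conjugate D\<close> by simp
    then show "u + v < ht (c,r)"
      by simp
  qed
  ultimately show ?thesis
    unfolding Xset_iff using h(2,3) by (intro exI[of _ b] exI[of _ a] conjI) simp_all
qed

lemma Xset_conjugate:
  assumes P: "is_partition D"
  shows "Xset (conjugate D) (c,r) = uminus ` Xset D (r,c)"
proof (rule set_eqI)
  fix x
  show "x \<in> Xset (conjugate D) (c,r) \<longleftrightarrow> x \<in> uminus ` Xset D (r,c)"
    using uminus_in_Xset_conjugate[OF P, of "-x" r c]
      uminus_in_Xset_conjugate[OF is_partition_conjugate[OF P], of x c r]
      image_iff[of x uminus "Xset D (r,c)"] by (metis conjugate_conjugate minus_minus)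
qed

lemma bracket_closed_up:
  assumes P: "is_partition D" and A: "addable D (r,c)" and X: "x \<in> Xset D (r,c)"
    and uv: "(u,v) \<in> bracket D (col (r,c)) x" "1 < u"
  shows "(u-1,v) \<in> bracket D (col (r,c)) x"
proof (rule ccontr)
  let ?j = "col (r,c)"
  assume not_up: "(u-1,v) \<notin> bracket D ?j x"
  obtain nx ny where n: "removable D (nx,ny)" "int ny - int nx = ?j + x"
    using X unfolding Xset_iff by blast
  have nD: "(nx,ny) \<in> D" "(nx+1,ny) \<notin> D" "(nx,ny+1) \<notin> D"
    using n(1) removable_iff[OF P] by auto
  then have n_last: "(nx+1,ny+1) \<notin> D"
    using is_partition_downward_closed[OF P, of "nx+1" "ny+1" "nx+1" ny] is_partition_pos[OF P] by auto
  have uD: "(u,v) \<in> D"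
    using uv mem_bracket[OF P] by simp
  then have wD: "(u-1,v) \<in> D"
    using is_partition_downward_closed[OF P uD, of "u-1" v] is_partition_pos[OF P uD] uv by simp
  then have w: "int v - int (u-1) \<in> bracket_cols ?j x" "(u,v+1) \<notin> D"
    using not_up mem_bracket[OF P, of "u-1" v] uv by auto
  then have "(u+1,v+1) \<notin> D"
    using is_partition_downward_closed[OF P, of "u+1" "v+1" u "v+1"] uv by auto
  then have "int v - int u \<notin> bracket_cols ?j x"
    using uv mem_bracket[OF P] by simp
  then have "(0 < x \<and> int v - int u = ?j) \<or> (x < 0 \<and> int v - int (u-1) = ?j + x)"
    using w(1) uv(2) unfolding mem_bracket_cols by auto
  then show False
  proof
    assume "0 < x \<and> int v - int u = ?j"
    then show False
      using addable_col_node_successors[OF P A uD] w(2) by simp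
  next
    \<comment> \<open>The top node of column j + x is the removable node, which has no lower neighbour.\<close>
    assume "x < 0 \<and> int v - int (u-1) = ?j + x"
    then have "u - 1 = nx \<and> v = ny"
      using same_col_no_diagonal_successor_unique[OF P wD nD(1) _ _ n_last] n(2) w(2) uv(2) by simp
    then show False
      using uD uv(2) nD(2) by auto
  qed
qed

lemma is_partition_bracket:
  assumes P: "is_partition D" and A: "addable D (r,c)" and X: "x \<in> Xset D (r,c)"
  shows "is_partition (bracket D (col (r,c)) x)"
proof (rule is_partitionI)
  let ?E = "bracket D (col (r,c)) x"
  show "finite ?E"
    using finite_subset[OF bracket_subset is_partition_finite[OF P]] .
  show "1 \<le> u \<and> 1 \<le> v" if "(u,v) \<in> ?E" for u v
    using that bracket_subset is_partition_pos[OF P] by blast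
  show "(u-1,v) \<in> ?E" if "(u,v) \<in> ?E" "1 < u" for u v
    using bracket_closed_up[OF P A X that] .
  show "(u,v-1) \<in> ?E" if "(u,v) \<in> ?E" "1 < v" for u v
  proof -
    have "-x \<in> Xset (conjugate D) (c,r)"
      using uminus_in_Xset_conjugate[OF P X] .
    moreover have "bracket (conjugate D) (col (c,r)) (-x) = conjugate ?E"
      using bracket_conjugate[OF P, of "col (r,c)" x] by simp
    ultimately show ?thesis
      using bracket_closed_up[OF is_partition_conjugate[OF P], of c r "-x" v u]
        addable_conjugate[OF P] A that by simp
  qed
qed

lemma sum_bracket_conjugate:
  assumes P: "is_partition D" and A: "addable D (r,c)"
  shows "(\<Sum>x\<in>{x\<in>Xset (conjugate D) (c,r). Q x}. F (bracket (conjugate D) (col (c,r)) x))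
       = (\<Sum>x\<in>{x\<in>Xset D (r,c). Q (-x)}. F (bracket D (col (r,c)) x))"
proof -
  have S: "{x\<in>Xset (conjugate D) (c,r). Q x} = uminus ` {x\<in>Xset D (r,c). Q (-x)}"
    unfolding Xset_conjugate[OF P] by auto
  have "F (bracket (conjugate D) (col (c,r)) (-x)) = F (bracket D (col (r,c)) x)"
    if "x \<in> Xset D (r,c)" for x
    using bracket_conjugate[OF P, of "col (r,c)" x] F_conjugate[OF is_partition_bracket[OF P A that]]
    by simp
  then show ?thesis
    unfolding S by (subst sum.reindex) (auto simp: inj_on_def)
qed

section \<open>Adding a node above all others\<close>

lemma bracket_sum_first_row_base:
  assumes P: "is_partition \<mu>" and top: "(1,b) \<in> \<mu>" and H: "\<forall>p\<in>\<mu>. ht p \<le> b + 1"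
    and only_top: "\<forall>u v. (u,v) \<in> \<mu> \<longrightarrow> u + v = b + 1 \<longrightarrow> u = 1"
  shows "(\<Sum>x\<in>Xset \<mu> (1,b+1). F (bracket \<mu> (col (1,b+1)) x)) = b * F (rows_below \<mu> 1)"
proof -
  have b1: "1 \<le> b"
    using is_partition_pos[OF P top] by simp
  have H': "\<forall>p\<in>\<mu>. ht p < 1 + (b + 1)"
    using H by auto
  have X: "Xset \<mu> (1,b+1) = {-1}"
    unfolding set_eq_iff mem_Xset_if_all_lower[OF P H']
  proof (intro allI iffI)
    fix x
    assume "\<exists>u v. (u,v) \<in> \<mu> \<and> u + v + 1 = 1 + (b+1) \<and> x = int v - int u - (int (b+1) - int 1)"
    then obtain u v where "(u,v) \<in> \<mu>" "u + v = b + 1" "x = int v - int u - int b"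
      by auto
    then show "x \<in> {-1}"
      using only_top[rule_format, of u v] by auto
  next
    fix x :: int
    assume "x \<in> {-1}"
    then show "\<exists>u v. (u,v) \<in> \<mu> \<and> u + v + 1 = 1 + (b+1) \<and> x = int v - int u - (int (b+1) - int 1)"
      using top by (intro exI[of _ 1] exI[of _ b]) auto
  qed
  define \<mu>' where "\<mu>' = bracket \<mu> (col (1,b+1)) (-1)"
  have diag: "(u,v) = (1,b)" if "(u,v) \<in> \<mu>" "int v - int u = int b - 1" for u v
  proof -
    have "u + v \<le> b + 1"
      using H that(1) by fastforce
    then show ?thesis
      using that(2) is_partition_pos[OF P that(1)] by auto
  qed
  have "(2,b+1) \<notin> \<mu>"
    using H by fastforce
  then have mem': "(u,v) \<in> \<mu>' \<longleftrightarrow> (u,v) \<in> \<mu> \<and> (u,v) \<noteq> (1,b)" for u v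
    unfolding \<mu>'_def mem_bracket[OF P] mem_bracket_cols using diag[of u v]
    by (auto simp: numeral_2_eq_2)
  have "addable \<mu> (1,b+1)" and "-1 \<in> Xset \<mu> (1,b+1)"
    using X H top by (auto simp: addable_iff[OF P])
  then have P': "is_partition \<mu>'"
    unfolding \<mu>'_def by (rule is_partition_bracket[OF P])
  have "F \<mu>' = (b-1+1) * F (rows_below \<mu>' 1)"
  proof (rule F_eq_first_row[OF P'])
    show "(1,b-1) \<in> \<mu>'" if "1 \<le> b - 1"
      using mem' is_partition_downward_closed[OF P top, of 1 "b-1"] that by simp
    show "\<forall>p\<in>\<mu>'. ht p \<le> b - 1 + 1"
      using H only_top b1 mem' by fastforce
  qed
  moreover have "rows_below \<mu>' 1 = rows_below \<mu> 1"
    by (rule pair_set_eqI) (auto simp: mem')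
  ultimately show ?thesis
    unfolding X \<mu>'_def using b1 by simp
qed

context
  fixes \<mu> :: "node set" and a b :: nat
  assumes P: "is_partition \<mu>" and top: "(a,b) \<in> \<mu>" and H: "\<forall>p\<in>\<mu>. ht p \<le> a + b"
    and lowest_top: "\<forall>u v. (u,v) \<in> \<mu> \<longrightarrow> u + v = a + b \<longrightarrow> u \<le> a"
    and first_row: "(1, a+b-1) \<in> \<mu>"
    and a2: "2 \<le> a"
begin

lemma top_col_pos: "1 \<le> b"
  using is_partition_pos[OF P top] by simp

lemma ht_cols_right_top_less: "\<forall>p\<in>cols_right \<mu> b. ht p < 1 + a"
  using ht_cols_right_le[OF H] top_col_pos by fastforce

lemma Xset_first_row_eq_insert:
  "Xset \<mu> (1,a+b) = insert (1 - 2 * int a) (Xset (cols_right \<mu> b) (1,a))"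
proof -
  have H': "\<forall>p\<in>\<mu>. ht p < 1 + (a+b)"
    using H by auto
  have "x \<in> Xset \<mu> (1,a+b) \<longleftrightarrow> x \<in> insert (1 - 2 * int a) (Xset (cols_right \<mu> b) (1,a))" for x
    unfolding insert_iff mem_Xset_if_all_lower[OF P H']
      mem_Xset_if_all_lower[OF is_partition_cols_right[OF P] ht_cols_right_top_less]
  proof
    assume "\<exists>u v. (u,v) \<in> \<mu> \<and> u + v + 1 = 1 + (a+b) \<and> x = int v - int u - (int (a+b) - int 1)"
    then obtain u v where uv: "(u,v) \<in> \<mu>" "u + v = a + b" "x = int v - int u - (int (a+b) - 1)"
      by auto
    show "x = 1 - 2 * int a \<or>
      (\<exists>u v. (u,v) \<in> cols_right \<mu> b \<and> u + v + 1 = 1 + a \<and> x = int v - int u - (int a - int 1))"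
    proof (cases "u = a")
      case False
      then have "u < a"
        using lowest_top uv by fastforce
      then show ?thesis
        using uv by (intro disjI2 exI[of _ u] exI[of _ "v-b"]) auto
    qed (use uv in auto)
  next
    assume "x = 1 - 2 * int a \<or>
      (\<exists>u v. (u,v) \<in> cols_right \<mu> b \<and> u + v + 1 = 1 + a \<and> x = int v - int u - (int a - int 1))"
    then show "\<exists>u v. (u,v) \<in> \<mu> \<and> u + v + 1 = 1 + (a+b) \<and> x = int v - int u - (int (a+b) - int 1)"
    proof
      assume "x = 1 - 2 * int a"
      then show ?thesis
        using top by (intro exI[of _ a] exI[of _ b]) auto
    next
      assume "\<exists>u v. (u,v) \<in> cols_right \<mu> b \<and> u + v + 1 = 1 + a \<and> x = int v - int u - (int a - int 1)"
      then obtain u v where "(u,v+b) \<in> \<mu>" "u + v = a" "x = int v - int u - (int a - 1)"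
        by auto
      then show ?thesis
        by (intro exI[of _ u] exI[of _ "v+b"]) auto
    qed
  qed
  then show ?thesis
    by blast
qed

lemma first_row_outer_notin_Xset: "1 - 2 * int a \<notin> Xset (cols_right \<mu> b) (1,a)"
  unfolding mem_Xset_if_all_lower[OF is_partition_cols_right[OF P] ht_cols_right_top_less]
  using is_partition_pos[OF P] by fastforce

lemma bracket_rows_below_top_eq_self:
  assumes "\<forall>k\<in>bracket_cols j x. int b \<le> k"
  shows "bracket (rows_below \<mu> a) j x = rows_below \<mu> a"
proof (rule bracket_eq_self[OF is_partition_rows_below[OF P]])
  fix u v
  assume "(u,v) \<in> rows_below \<mu> a"
  then have "int v - int u < int b"
    using ht_rows_below_le[OF H, of "(u,v)" a] by simp
  then show "int v - int u \<notin> bracket_cols j x"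
    using assms by force
qed

lemma F_bracket_first_row_inner:
  assumes x: "x \<in> Xset (cols_right \<mu> b) (1,a)"
  shows "F (bracket \<mu> (col (1,a+b)) x)
    = ((a+b) choose a) * F (rows_below \<mu> a) * F (bracket (cols_right \<mu> b) (col (1,a)) x)"
proof -
  obtain u v where uv: "(u,v+b) \<in> \<mu>" "0 < v" "u + v = a" "x = int v - int u - (int a - 1)"
    using x unfolding mem_Xset_if_all_lower[OF is_partition_cols_right[OF P] ht_cols_right_top_less]
    by auto
  have x_range: "x \<le> -1" "3 - 2 * int a \<le> x"
    using uv is_partition_pos[OF P uv(1)] by auto
  define E where "E = bracket \<mu> (col (1,a+b)) x"
  have "addable \<mu> (1,a+b)"
    using H first_row a2 by (auto simp: addable_iff[OF P])
  then have PE: "is_partition E"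
    unfolding E_def using is_partition_bracket[OF P] x Xset_first_row_eq_insert by blast
  have "(a,b) \<in> E"
    unfolding E_def mem_bracket[OF P] using top x_range by (auto simp: mem_bracket_cols)
  moreover have "\<forall>p\<in>E. ht p \<le> a + b"
    using H bracket_subset unfolding E_def by blast
  ultimately have "F E = ((a+b) choose a) * F (rows_below E a) * F (cols_right E b)"
    by (rule F_eq_at_highest[OF PE])
  moreover have "rows_below E a = rows_below \<mu> a"
    unfolding E_def rows_below_bracket[OF P] using x_range
    by (intro bracket_rows_below_top_eq_self) (auto simp: mem_bracket_cols)
  moreover have "cols_right E b = bracket (cols_right \<mu> b) (col (1,a)) x"
    unfolding E_def cols_right_bracket[OF P] by simp
  ultimately show ?thesis
    unfolding E_def by simp
qed

lemma mem_bracket_first_row_outer: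
  "(u,v) \<in> bracket \<mu> (col (1,a+b)) (1 - 2 * int a) \<longleftrightarrow>
    (u,v) \<in> \<mu> \<and> \<not> (int b - int a \<le> int v - int u \<and> int v - int u \<le> int (a+b) - 2 \<and> (u+1,v+1) \<notin> \<mu>)"
  unfolding mem_bracket[OF P] mem_bracket_cols using a2 by auto

lemma cols_right_bracket_first_row_outer:
  "cols_right (bracket \<mu> (col (1,a+b)) (1 - 2 * int a)) (b-1) = rows_below (cols_right \<mu> b) 1"
proof (rule pair_set_eqI)
  fix u v
  note mem = mem_bracket_first_row_outer
  show "(u,v) \<in> cols_right (bracket \<mu> (col (1,a+b)) (1 - 2 * int a)) (b-1) \<longleftrightarrow>
    (u,v) \<in> rows_below (cols_right \<mu> b) 1"
  proof
    assume "(u,v) \<in> cols_right (bracket \<mu> (col (1,a+b)) (1 - 2 * int a)) (b-1)"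
    then have h: "0 < v" "(u, v+(b-1)) \<in> bracket \<mu> (col (1,a+b)) (1 - 2 * int a)"
      by auto
    then have uv: "(u, v+(b-1)) \<in> \<mu>"
      using mem by blast
    have "u + (v + (b-1)) \<le> a + b" "1 \<le> u"
      using H uv is_partition_pos[OF P uv] by fastforce+
    \<comment> \<open>The node lies in one of the columns b - a, ..., a + b - 2, so it survives only
        because it has a diagonal successor.\<close>
    then have "(u+1, v+(b-1)+1) \<in> \<mu>"
      using h mem top_col_pos by fastforce
    then show "(u,v) \<in> rows_below (cols_right \<mu> b) 1"
      using h \<open>1 \<le> u\<close> top_col_pos by (simp add: add_ac)
  next
    assume "(u,v) \<in> rows_below (cols_right \<mu> b) 1"
    then have h: "0 < u" "0 < v" "(u+1, v+b) \<in> \<mu>"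
      by auto
    then have "(u, v+(b-1)) \<in> \<mu>"
      using is_partition_downward_closed[OF P h(3), of u "v+(b-1)"] by simp
    moreover have "(u+1, v+(b-1)+1) \<in> \<mu>"
      using h top_col_pos by simp
    ultimately show "(u,v) \<in> cols_right (bracket \<mu> (col (1,a+b)) (1 - 2 * int a)) (b-1)"
      using h mem by simp
  qed
qed

lemma F_bracket_first_row_outer:
  "F (bracket \<mu> (col (1,a+b)) (1 - 2 * int a))
    = ((a+b-1) choose a) * F (rows_below \<mu> a) * F (rows_below (cols_right \<mu> b) 1)"
proof -
  define E where "E = bracket \<mu> (col (1,a+b)) (1 - 2 * int a)"
  have "addable \<mu> (1,a+b)"
    using H first_row a2 by (auto simp: addable_iff[OF P])
  then have PE: "is_partition E"
    unfolding E_def using is_partition_bracket[OF P] Xset_first_row_eq_insert by blast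
  have rows: "rows_below E a = rows_below \<mu> a"
    unfolding E_def rows_below_bracket[OF P]
    by (intro bracket_rows_below_top_eq_self) (auto simp: mem_bracket_cols)
  have cols: "cols_right E (b-1) = rows_below (cols_right \<mu> b) 1"
    unfolding E_def by (rule cols_right_bracket_first_row_outer)
  show ?thesis
  proof (cases "b = 1")
    case True
    then have "rows_below \<mu> a = {}"
      using rows_below_eq_empty[OF P] H by simp
    then show ?thesis
      using cols cols_right_0[OF PE] True unfolding E_def by simp
  next
    case False
    have "(a,b-1) \<in> E"
      unfolding E_def mem_bracket_first_row_outer
      using is_partition_downward_closed[OF P top, of a "b-1"] a2 False top_col_pos by simp
    moreover have "\<forall>p\<in>E. ht p \<le> a + (b-1)"
    proof
      fix p
      assume "p \<in> E"
      then obtain u v where p: "p = (u,v)" "(u,v) \<in> E"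
        by (cases p) auto
      then have uv: "(u,v) \<in> \<mu>"
        unfolding E_def mem_bracket_first_row_outer by blast
      \<comment> \<open>The nodes of height a + b are the highest nodes of columns b - a, ..., a + b - 2.\<close>
      have "u + v \<noteq> a + b"
        using p(2) lowest_top H is_partition_pos[OF P uv] uv
        unfolding E_def mem_bracket_first_row_outer by fastforce
      then show "ht p \<le> a + (b-1)"
        using H uv p False top_col_pos by fastforce
    qed
    ultimately show ?thesis
      using F_eq_at_highest[OF PE] rows cols False top_col_pos unfolding E_def by simp
  qed
qed

lemma addable_cols_right_top: "addable (cols_right \<mu> b) (1,a)"
  using first_row a2 H by (fastforce simp: addable_iff[OF is_partition_cols_right[OF P]])

lemma bracket_sum_first_row_step:
  assumes IH: "(\<Sum>x\<in>Xset (cols_right \<mu> b) (1,a). F (bracket (cols_right \<mu> b) (col (1,a)) x))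
    = (a-1) * F (rows_below (cols_right \<mu> b) 1)"
  shows "(\<Sum>x\<in>Xset \<mu> (1,a+b). F (bracket \<mu> (col (1,a+b)) x)) = (a+b-1) * F (rows_below \<mu> 1)"
proof -
  let ?\<rho> = "cols_right \<mu> b"
  define K where "K = (a+b) choose a"
  define Y where "Y = F (rows_below \<mu> a) * F (rows_below ?\<rho> 1)"
  have "(\<Sum>x\<in>Xset \<mu> (1,a+b). F (bracket \<mu> (col (1,a+b)) x))
      = ((a+b-1) choose a) * Y + (\<Sum>x\<in>Xset ?\<rho> (1,a). K * F (rows_below \<mu> a) * F (bracket ?\<rho> (col (1,a)) x))"
    unfolding Xset_first_row_eq_insert
    using finite_Xset[OF is_partition_finite[OF is_partition_cols_right[OF P]]]
      first_row_outer_notin_Xset F_bracket_first_row_outer F_bracket_first_row_inner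
    by (simp add: K_def Y_def)
  also have "\<dots> = ((a+b-1) choose a) * Y + (a-1) * K * Y"
    unfolding sum_distrib_left[symmetric] IH Y_def by (simp add: mult_ac)
  also have "\<dots> = (a+b-1) * F (rows_below \<mu> 1)"
  proof -
    have "F \<mu> = (a+b-1+1) * F (rows_below \<mu> 1)"
      by (rule F_eq_first_row[OF P]) (use first_row H a2 in auto)
    moreover have "F \<mu> = K * F (rows_below \<mu> a) * F ?\<rho>"
      unfolding K_def by (rule F_eq_at_highest[OF P top H])
    moreover have "F ?\<rho> = (a-1+1) * F (rows_below ?\<rho> 1)"
      by (rule F_eq_first_row[OF is_partition_cols_right[OF P]])
        (use first_row a2 ht_cols_right_top_less in auto)
    ultimately have "(a+b) * ((a+b-1) * F (rows_below \<mu> 1)) = (a+b-1) * (a * K) * Y"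
      using a2 unfolding Y_def by (simp add: mult_ac)
    also have "\<dots> = (a+b) * (((a+b-1) choose a) + (a-1) * K) * Y"
      using first_row_binomial_identity[of a b] a2 unfolding K_def by (simp only:)
    also have "\<dots> = (a+b) * (((a+b-1) choose a) * Y + (a-1) * K * Y)"
      by (simp add: distrib_left distrib_right mult_ac)
    finally show ?thesis
      using a2 by simp
  qed
  finally show ?thesis .
qed

end

lemma lowest_node_of_height:
  fixes D :: "node set"
  assumes "(u0,v0) \<in> D" "u0 + v0 = n"
  obtains a b where "(a,b) \<in> D" "a + b = n" "\<forall>u v. (u,v) \<in> D \<longrightarrow> u + v = n \<longrightarrow> u \<le> a"
proof -
  have "\<forall>u. (\<exists>v. (u,v) \<in> D \<and> u + v = n) \<longrightarrow> u \<le> n"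
    by auto
  then obtain a where "\<exists>b. (a,b) \<in> D \<and> a + b = n" "\<forall>u. (\<exists>v. (u,v) \<in> D \<and> u + v = n) \<longrightarrow> u \<le> a"
    using Nat.ex_has_greatest_nat[of "\<lambda>u. \<exists>v. (u,v) \<in> D \<and> u + v = n" u0 n] assms by blast
  then show ?thesis
    using that by blast
qed

lemma bracket_sum_first_row:
  assumes "is_partition \<mu>" and "addable \<mu> (1,c)" and "\<forall>p\<in>\<mu>. ht p \<le> c"
  shows "(\<Sum>x\<in>Xset \<mu> (1,c). F (bracket \<mu> (col (1,c)) x)) = (c-1) * F (rows_below \<mu> 1)"
  using assms
proof (induction "card \<mu>" arbitrary: \<mu> c rule: less_induct)
  case less
  note P = less.prems(1) and H = less.prems(3)
  have c1: "1 \<le> c" and first_row: "2 \<le> c \<Longrightarrow> (1,c-1) \<in> \<mu>"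
    using less.prems(2) addable_iff[OF P] by auto
  show ?case
  proof (cases "c = 1")
    case True
    then have "\<mu> = {}"
      using H is_partition_pos[OF P] by fastforce
    then show ?thesis
      using True by (simp add: Xset_def removable_def)
  next
    case False
    then have c2: "2 \<le> c"
      using c1 by simp
    have "1 + (c-1) = c"
      using c2 by simp
    then obtain a b where top: "(a,b) \<in> \<mu>" and ab: "a + b = c"
      and lowest: "\<forall>u v. (u,v) \<in> \<mu> \<longrightarrow> u + v = c \<longrightarrow> u \<le> a"
      using lowest_node_of_height[OF first_row[OF c2]] by blast
    then have c_eq: "c = a + b" and lowest_top: "\<forall>u v. (u,v) \<in> \<mu> \<longrightarrow> u + v = a + b \<longrightarrow> u \<le> a"
      by simp_all
    show ?thesis
    proof (cases "a = 1")
      case True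
      have top': "(1,b) \<in> \<mu>" and H': "\<forall>p\<in>\<mu>. ht p \<le> b + 1"
        using top H c_eq True by auto
      have only_top: "\<forall>u v. (u,v) \<in> \<mu> \<longrightarrow> u + v = b + 1 \<longrightarrow> u = 1"
      proof (intro allI impI)
        fix u v
        assume "(u,v) \<in> \<mu>" "u + v = b + 1"
        then show "u = 1"
          using lowest_top[rule_format, of u v] is_partition_pos[OF P, of u v] True by simp
      qed
      have "c = b + 1"
        using c_eq True by simp
      then show ?thesis
        using bracket_sum_first_row_base[OF P top' H' only_top] by simp
    next
      case False
      then have a2: "2 \<le> a"
        using is_partition_pos[OF P top] by simp
      have "(1, a+b-1) \<in> \<mu>"
        using first_row c2 c_eq by simp
      note setting = P top H[unfolded c_eq] lowest_top this a2
      have "card (cols_right \<mu> b) < card \<mu>"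
        using card_cols_right_less[OF is_partition_finite[OF P] top] .
      moreover have "\<forall>p\<in>cols_right \<mu> b. ht p \<le> a"
        using ht_cols_right_top_less[OF setting] by auto
      ultimately have "(\<Sum>x\<in>Xset (cols_right \<mu> b) (1,a). F (bracket (cols_right \<mu> b) (col (1,a)) x))
          = (a-1) * F (rows_below (cols_right \<mu> b) 1)"
        using less.hyps is_partition_cols_right[OF P] addable_cols_right_top[OF setting] by blast
      then show ?thesis
        unfolding c_eq by (rule bracket_sum_first_row_step[OF setting])
    qed
  qed
qed

definition bracket_sum_neg :: "node set \<Rightarrow> node \<Rightarrow> nat" where
  "bracket_sum_neg D l = (\<Sum>x\<in>{x\<in>Xset D l. x < 0}. F (bracket D (col l) x))"

definition bracket_sum_pos :: "node set \<Rightarrow> node \<Rightarrow> nat" where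
  "bracket_sum_pos D l = (\<Sum>x\<in>{x\<in>Xset D l. 0 < x}. F (bracket D (col l) x))"

lemma sum_bracket_eq_neg_plus_pos:
  assumes "finite D"
  shows "(\<Sum>x\<in>Xset D l. F (bracket D (col l) x)) = bracket_sum_neg D l + bracket_sum_pos D l"
proof -
  have split: "Xset D l = {x\<in>Xset D l. x < 0} \<union> {x\<in>Xset D l. 0 < x}"
    using zero_notin_Xset[of D l] by (auto, metis linorder_neqE_linordered_idom)
  show ?thesis
    unfolding bracket_sum_neg_def bracket_sum_pos_def
    by (subst split, rule sum.union_disjoint) (use finite_Xset[OF assms] in auto)
qed

lemma bracket_sum_pos_conjugate:
  assumes "is_partition D" and "addable D (r,c)"
  shows "bracket_sum_pos D (r,c) = bracket_sum_neg (conjugate D) (c,r)"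
  unfolding bracket_sum_pos_def bracket_sum_neg_def
  using sum_bracket_conjugate[OF assms, of "\<lambda>x. x < 0"] by simp

lemma F_if_all_lower:
  assumes P: "is_partition D" and A: "addable D (r,c)" and H: "\<forall>p\<in>D. ht p < r + c"
  shows "F D = c * ((r+c-1) choose (r-1)) * F (rows_below D r) * F (cols_right D c)"
proof -
  have a: "(r,c) \<notin> D" "1 \<le> r" "1 \<le> c" "1 < r \<longrightarrow> (r-1,c) \<in> D" "1 < c \<longrightarrow> (r,c-1) \<in> D"
    using A addable_iff[OF P] by auto
  show ?thesis
  proof (cases "r = 1")
    case True
    have "F D = (c-1+1) * F (rows_below D 1)"
      by (rule F_eq_first_row[OF P]) (use a H True in auto)
    moreover have "cols_right D c = {}"
      by (rule cols_right_eq_empty[OF P]) (use H True in auto)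
    ultimately show ?thesis
      using True a by simp
  next
    case False
    then have r2: "2 \<le> r"
      using a by simp
    let ?B = "rows_below D (r-1)"
    have "F D = ((r-1+c) choose (r-1)) * F ?B * F (cols_right D c)"
      by (rule F_eq_at_highest[OF P]) (use a r2 H in auto)
    moreover have "F ?B = (c-1+1) * F (rows_below ?B 1)"
    proof (rule F_eq_first_row[OF is_partition_rows_below[OF P]])
      show "(1, c-1) \<in> ?B" if "1 \<le> c-1"
        using a that r2 by simp
      show "\<forall>p\<in>?B. ht p \<le> c - 1 + 1"
        using ht_rows_below_le[of D "r+c-1" _ "r-1"] H a r2 by fastforce
    qed
    moreover have "rows_below ?B 1 = rows_below D r"
      using rows_below_rows_below[of D "r-1" 1] r2 by simp
    ultimately show ?thesis
      using a r2 by (simp add: mult_ac)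
  qed
qed

lemma F_insert_if_all_lower:
  assumes P: "is_partition D" and A: "addable D (r,c)" and H: "\<forall>p\<in>D. ht p < r + c"
  shows "F (insert (r,c) D) = ((r+c) choose r) * F (rows_below D r) * F (cols_right D c)"
proof -
  have "F (insert (r,c) D) = ((r+c) choose r) * F (rows_below (insert (r,c) D) r) * F (cols_right (insert (r,c) D) c)"
    by (rule F_eq_at_highest) (use A H in \<open>auto simp: addable_def\<close>)
  moreover have "rows_below (insert (r,c) D) r = rows_below D r"
    by (rule pair_set_eqI) auto
  moreover have "cols_right (insert (r,c) D) c = cols_right D c"
    by (rule pair_set_eqI) auto
  ultimately show ?thesis
    by simp
qed

lemma ht_rows_below_if_all_lower:
  assumes "addable D (r,c)" and "\<forall>p\<in>D. ht p < r + c"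
  shows "\<forall>p\<in>rows_below D (r-1). ht p \<le> c"
  using ht_rows_below_le[of D "r+c-1" _ "r-1"] assms by (fastforce simp: addable_def)

lemma neg_Xset_eq_rows_below:
  assumes P: "is_partition D" and A: "addable D (r,c)" and H: "\<forall>p\<in>D. ht p < r + c" and r2: "2 \<le> r"
  shows "{x\<in>Xset D (r,c). x < 0} = Xset (rows_below D (r-1)) (1,c)"
proof -
  have HB: "\<forall>p\<in>rows_below D (r-1). ht p < 1 + c"
    using ht_rows_below_if_all_lower[OF A H] by auto
  show ?thesis
  proof (rule set_eqI)
    fix x
    have "(\<exists>u v. (u,v) \<in> D \<and> u + v + 1 = r + c \<and> x = int v - int u - (int c - int r)) \<and> x < 0 \<longleftrightarrow>
      (\<exists>u v. (u,v) \<in> rows_below D (r-1) \<and> u + v + 1 = 1 + c \<and> x = int v - int u - (int c - int 1))"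
    proof
      assume "(\<exists>u v. (u,v) \<in> D \<and> u + v + 1 = r + c \<and> x = int v - int u - (int c - int r)) \<and> x < 0"
      then obtain u v where uv: "(u,v) \<in> D" "u + v + 1 = r + c" "x = int v - int u - (int c - int r)" "x < 0"
        by blast
      then have "r \<le> u"
        by linarith
      then show "\<exists>u v. (u,v) \<in> rows_below D (r-1) \<and> u + v + 1 = 1 + c \<and> x = int v - int u - (int c - int 1)"
        using uv r2 by (intro exI[of _ "u - (r-1)"] exI[of _ v]) auto
    next
      assume "\<exists>u v. (u,v) \<in> rows_below D (r-1) \<and> u + v + 1 = 1 + c \<and> x = int v - int u - (int c - int 1)"
      then obtain u v where uv: "0 < u" "(u + (r-1), v) \<in> D" "u + v = c" "x = int v - int u - (int c - int 1)"
        by auto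
      then show "(\<exists>u v. (u,v) \<in> D \<and> u + v + 1 = r + c \<and> x = int v - int u - (int c - int r)) \<and> x < 0"
        using r2 by (intro conjI exI[of _ "u + (r-1)"] exI[of _ v]) auto
    qed
    then show "x \<in> {x\<in>Xset D (r,c). x < 0} \<longleftrightarrow> x \<in> Xset (rows_below D (r-1)) (1,c)"
      by (simp only: mem_Collect_eq mem_Xset_if_all_lower[OF P H]
          mem_Xset_if_all_lower[OF is_partition_rows_below[OF P] HB])
  qed
qed

lemma F_bracket_neg_if_all_lower:
  assumes P: "is_partition D" and A: "addable D (r,c)" and H: "\<forall>p\<in>D. ht p < r + c" and r2: "2 \<le> r"
    and x: "x \<in> Xset (rows_below D (r-1)) (1,c)"
  shows "F (bracket D (col (r,c)) x)
    = ((r-1+c) choose (r-1)) * F (bracket (rows_below D (r-1)) (col (1,c)) x) * F (cols_right D c)"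
proof -
  have xD: "x \<in> Xset D (r,c)" and neg: "x < 0"
    using x neg_Xset_eq_rows_below[OF P A H r2] by auto
  have a: "(r,c) \<notin> D" "1 \<le> c" "(r-1,c) \<in> D"
    using A addable_iff[OF P] r2 by auto
  define E where "E = bracket D (col (r,c)) x"
  have PE: "is_partition E"
    unfolding E_def by (rule is_partition_bracket[OF P A xD])
  have "(r-1,c) \<in> E"
    unfolding E_def mem_bracket[OF P] using a r2 neg by (auto simp: mem_bracket_cols)
  moreover have "\<forall>p\<in>E. ht p \<le> (r-1) + c"
    using H bracket_subset r2 unfolding E_def by fastforce
  ultimately have "F E = ((r-1+c) choose (r-1)) * F (rows_below E (r-1)) * F (cols_right E c)"
    by (rule F_eq_at_highest[OF PE])
  moreover have "rows_below E (r-1) = bracket (rows_below D (r-1)) (col (1,c)) x"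
    unfolding E_def rows_below_bracket[OF P] using r2 by simp
  moreover have "cols_right E c = cols_right D c"
    unfolding E_def cols_right_bracket[OF P]
  proof (rule bracket_eq_self[OF is_partition_cols_right[OF P]])
    fix u v
    assume "(u,v) \<in> cols_right D c"
    then have "0 < v" "(u, v+c) \<in> D"
      by auto
    \<comment> \<open>Such a node lies in a row above r, hence right of column c - r, while x < 0 only
        removes columns left of it.\<close>
    then have "u < r"
      using is_partition_downward_closed[OF P, of u "v+c" r c] a r2 by (cases "u < r") auto
    then show "int v - int u \<notin> bracket_cols (col (r,c) - int c) x"
      using neg \<open>0 < v\<close> by (auto simp: mem_bracket_cols)
  qed
  ultimately show ?thesis
    unfolding E_def by simp
qed

lemma bracket_sum_neg_if_all_lower:
  assumes P: "is_partition D" and A: "addable D (r,c)" and H: "\<forall>p\<in>D. ht p < r + c"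
  shows "bracket_sum_neg D (r,c) = (c-1) * ((r+c-1) choose (r-1)) * F (rows_below D r) * F (cols_right D c)"
proof -
  have a: "1 \<le> r" "1 \<le> c" "1 < c \<longrightarrow> (r,c-1) \<in> D"
    using A addable_iff[OF P] by auto
  show ?thesis
  proof (cases "r = 1")
    case True
    have "x < 0" if "x \<in> Xset D (r,c)" for x
      using that True is_partition_pos[OF P] unfolding mem_Xset_if_all_lower[OF P H] by fastforce
    then have "{x\<in>Xset D (r,c). x < 0} = Xset D (1,c)"
      using True by auto
    moreover have "\<forall>p\<in>D. ht p \<le> c"
      using H True by fastforce
    ultimately have "bracket_sum_neg D (r,c) = (c-1) * F (rows_below D 1)"
      unfolding bracket_sum_neg_def using bracket_sum_first_row[OF P] A True by simp
    moreover have "cols_right D c = {}"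
      by (rule cols_right_eq_empty[OF P]) (use H True in auto)
    ultimately show ?thesis
      using True by simp
  next
    case False
    then have r2: "2 \<le> r"
      using a by simp
    let ?B = "rows_below D (r-1)"
    have "addable ?B (1,c)"
      using A r2 by (auto simp: addable_iff[OF P] addable_iff[OF is_partition_rows_below[OF P]])
    then have sum_B: "(\<Sum>x\<in>Xset ?B (1,c). F (bracket ?B (col (1,c)) x)) = (c-1) * F (rows_below ?B 1)"
      using bracket_sum_first_row[OF is_partition_rows_below[OF P]] ht_rows_below_if_all_lower[OF A H]
      by blast
    have "bracket_sum_neg D (r,c)
        = (\<Sum>x\<in>Xset ?B (1,c). ((r-1+c) choose (r-1)) * F (bracket ?B (col (1,c)) x) * F (cols_right D c))"
      unfolding bracket_sum_neg_def neg_Xset_eq_rows_below[OF P A H r2]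
      using F_bracket_neg_if_all_lower[OF P A H r2] by simp
    also have "\<dots> = ((r-1+c) choose (r-1)) * F (cols_right D c) * (\<Sum>x\<in>Xset ?B (1,c). F (bracket ?B (col (1,c)) x))"
      by (simp add: sum_distrib_left sum_distrib_right mult_ac)
    also have "\<dots> = (c-1) * ((r+c-1) choose (r-1)) * F (rows_below D r) * F (cols_right D c)"
      unfolding sum_B using rows_below_rows_below[of D "r-1" 1] r2 by (simp add: mult_ac)
    finally show ?thesis .
  qed
qed

lemma binomial_bracket_identity:
  assumes "1 \<le> r" "1 \<le> c"
  shows "((r+c) choose r) + (c-1) * ((r+c-1) choose (r-1)) + (r-1) * ((c+r-1) choose (c-1))
    = 2 * c * ((r+c-1) choose (r-1))"
proof -
  obtain r' c' where r: "r = Suc r'" and c: "c = Suc c'"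
    using assms by (metis Suc_le_D One_nat_def)
  define A where "A = Suc (r'+c') choose r'"
  define B where "B = Suc (r'+c') choose Suc r'"
  have "Suc (r'+c') choose c' = Suc (r'+c') choose (Suc (r'+c') - c')"
    by (rule binomial_symmetric) simp
  then have B': "Suc (c'+r') choose c' = B"
    unfolding B_def by (simp add: add.commute Suc_diff_le)
  have "Suc r' * B = Suc c' * A"
    unfolding A_def B_def by (rule Suc_times_binomial_add)
  then have "(A+B) + c'*A + r'*B = 2 * Suc c' * A"
    by (simp add: algebra_simps)
  moreover have "(Suc r' + Suc c') choose Suc r' = A + B"
    unfolding A_def B_def by simp
  ultimately show ?thesis
    unfolding r c using B' by (simp add: A_def)
qed

definition bracket_identity :: "node set \<Rightarrow> node \<Rightarrow> bool" where
  "bracket_identity D l \<longleftrightarrow> F (insert l D) + (\<Sum>x\<in>Xset D l. F (bracket D (col l) x)) = 2 * F D"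

lemma bracket_identity_if_all_lower:
  assumes P: "is_partition D" and A: "addable D (r,c)" and H: "\<forall>p\<in>D. ht p < r + c"
  shows "bracket_identity D (r,c)"
proof -
  have a: "1 \<le> r" "1 \<le> c"
    using A addable_iff[OF P] by auto
  define Y where "Y = F (rows_below D r) * F (cols_right D c)"
  have "bracket_sum_pos D (r,c) = bracket_sum_neg (conjugate D) (c,r)"
    by (rule bracket_sum_pos_conjugate[OF P A])
  also have "\<dots> = (r-1) * ((c+r-1) choose (c-1)) * F (rows_below (conjugate D) c) * F (cols_right (conjugate D) r)"
    by (rule bracket_sum_neg_if_all_lower[OF is_partition_conjugate[OF P]])
      (use A addable_conjugate[OF P] ht_conjugate_less[OF H] in \<open>auto simp: add.commute\<close>)
  also have "\<dots> = (r-1) * ((c+r-1) choose (c-1)) * Y"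
    unfolding Y_def rows_below_conjugate cols_right_conjugate
      F_conjugate[OF is_partition_cols_right[OF P]] F_conjugate[OF is_partition_rows_below[OF P]]
    by (simp add: mult_ac)
  finally have pos: "bracket_sum_pos D (r,c) = (r-1) * ((c+r-1) choose (c-1)) * Y" .
  have "F (insert (r,c) D) + (\<Sum>x\<in>Xset D (r,c). F (bracket D (col (r,c)) x))
      = (((r+c) choose r) + (c-1) * ((r+c-1) choose (r-1)) + (r-1) * ((c+r-1) choose (c-1))) * Y"
    unfolding sum_bracket_eq_neg_plus_pos[OF is_partition_finite[OF P]] pos
      bracket_sum_neg_if_all_lower[OF P A H] F_insert_if_all_lower[OF P A H] Y_def
    by (simp add: algebra_simps)
  also have "\<dots> = 2 * F D"
    unfolding binomial_bracket_identity[OF a] F_if_all_lower[OF P A H] Y_def by (simp add: mult_ac)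
  finally show ?thesis
    unfolding bracket_identity_def .
qed

section \<open>Adding a node below a highest node\<close>

context
  fixes D :: "node set" and a b r c :: nat
  assumes P: "is_partition D" and A: "addable D (r,c)"
    and top: "(a,b) \<in> D" and Ht: "\<forall>p\<in>D. ht p \<le> a + b"
    and hl: "r + c \<le> a + b" and ra: "a < r"
begin

lemma addable_col_le_highest: "c \<le> b"
proof (rule ccontr)
  assume "\<not> c \<le> b"
  have "(r-1,c) \<in> D" "1 \<le> c"
    using A ra is_partition_pos[OF P top] by (auto simp: addable_iff[OF P])
  then have "(a,c) \<in> D"
    using is_partition_downward_closed[OF P, of "r-1" c a c] ra is_partition_pos[OF P top] by simp
  then show False
    using Ht \<open>\<not> c \<le> b\<close> by fastforce
qed

lemma Xset_subset_rows_below_highest: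
  assumes "x \<in> Xset D (r,c)"
  shows "x \<in> Xset (rows_below D a) (r-a,c)"
proof -
  obtain u v where w: "removable D (u,v)" "int v - int u = col (r,c) + x" "u + v + 1 = ht (r,c)"
    and between: "\<forall>u' v'. (u',v') \<in> D \<longrightarrow> min (col (r,c)) (col (r,c) + x) < int v' - int u' \<and>
      int v' - int u' < max (col (r,c)) (col (r,c) + x) \<longrightarrow> u' + v' < ht (r,c)"
    using assms unfolding Xset_iff by blast
  have uv: "(u,v) \<in> D" "(u+1,v) \<notin> D" "(u,v+1) \<notin> D"
    using w(1) removable_iff[OF P] by auto
  have pos: "1 \<le> u" "1 \<le> v"
    using is_partition_pos[OF P uv(1)] by auto
  \<comment> \<open>A removable node weakly above and left of (a,b) would be (a,b) itself, which is too high;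
      one to the right of column b - a would make (a,b) a node between the columns.\<close>
  have "a < u"
  proof (rule ccontr)
    assume "\<not> a < u"
    show False
    proof (cases "v \<le> b")
      case True
      then show False
        using is_partition_downward_closed[OF P top, of "u+1" v]
          is_partition_downward_closed[OF P top, of u "v+1"] \<open>\<not> a < u\<close> pos uv w(3) hl
        by (cases "u < a") auto
    next
      case False
      then have "a + b < ht (r,c)"
        using between top \<open>\<not> a < u\<close> w(2) ra addable_col_le_highest by (auto simp: min_def max_def)
      then show False
        using hl by simp
    qed
  qed
  have "\<forall>u' v'. (u',v') \<in> rows_below D a \<longrightarrow> min (col (r-a,c)) (col (r-a,c) + x) < int v' - int u' \<and>
      int v' - int u' < max (col (r-a,c)) (col (r-a,c) + x) \<longrightarrow> u' + v' < ht (r-a,c)"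
  proof (intro allI impI)
    fix u' v'
    assume h: "(u',v') \<in> rows_below D a" "min (col (r-a,c)) (col (r-a,c) + x) < int v' - int u' \<and>
      int v' - int u' < max (col (r-a,c)) (col (r-a,c) + x)"
    have "min (col (r,c)) (col (r,c) + x) < int v' - int (u'+a) \<and>
        int v' - int (u'+a) < max (col (r,c)) (col (r,c) + x)"
      using h(2) ra by (simp add: min_def max_def split: if_splits)
    then have "u' + a + v' < ht (r,c)"
      using between h(1) by simp
    then show "u' + v' < ht (r-a,c)"
      using ra by simp
  qed
  moreover have "removable (rows_below D a) (u-a,v)"
    unfolding removable_iff[OF is_partition_rows_below[OF P]] using uv \<open>a < u\<close> by simp
  ultimately show ?thesis
    unfolding Xset_iff using w(2,3) \<open>a < u\<close> ra
    by (intro exI[of _ "u-a"] exI[of _ v] conjI) auto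
qed

lemma Xset_rows_below_subset_highest:
  assumes "x \<in> Xset (rows_below D a) (r-a,c)"
  shows "x \<in> Xset D (r,c)"
proof -
  obtain u v where w: "removable (rows_below D a) (u,v)" "int v - int u = col (r-a,c) + x"
      "u + v + 1 = ht (r-a,c)"
    and between: "\<forall>u' v'. (u',v') \<in> rows_below D a \<longrightarrow> min (col (r-a,c)) (col (r-a,c) + x) < int v' - int u' \<and>
      int v' - int u' < max (col (r-a,c)) (col (r-a,c) + x) \<longrightarrow> u' + v' < ht (r-a,c)"
    using assms unfolding Xset_iff by blast
  have uv: "0 < u" "(u+a,v) \<in> D" "(u+1+a,v) \<notin> D" "(u+a,v+1) \<notin> D"
    using w(1) removable_iff[OF is_partition_rows_below[OF P]] by auto
  have "\<forall>u' v'. (u',v') \<in> D \<longrightarrow> min (col (r,c)) (col (r,c) + x) < int v' - int u' \<and>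
      int v' - int u' < max (col (r,c)) (col (r,c) + x) \<longrightarrow> u' + v' < ht (r,c)"
  proof (intro allI impI)
    fix u' v'
    assume h: "(u',v') \<in> D" "min (col (r,c)) (col (r,c) + x) < int v' - int u' \<and>
      int v' - int u' < max (col (r,c)) (col (r,c) + x)"
    show "u' + v' < ht (r,c)"
    proof (cases "a < u'")
      case True
      have "min (col (r-a,c)) (col (r-a,c) + x) < int v' - int (u'-a) \<and>
          int v' - int (u'-a) < max (col (r-a,c)) (col (r-a,c) + x)"
        using h(2) ra True by (simp add: min_def max_def split: if_splits)
      moreover have "(u'-a, v') \<in> rows_below D a"
        using h(1) True by simp
      ultimately have "u' - a + v' < ht (r-a,c)"
        using between by blast
      then show ?thesis
        using ra True by simp
    next
      \<comment> \<open>In the top a rows the column bound alone forces the height below r + c.\<close>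
      case False
      have "int v' - int u' < max (int c - int r) (int v - int (u+a))"
        using h(2) w(2) ra by (simp add: max_def split: if_splits)
      then show ?thesis
        using False ra w(3) by (simp add: max_def split: if_splits)
    qed
  qed
  moreover have "removable D (u+a,v)"
    unfolding removable_iff[OF P] using uv by (simp add: add_ac)
  ultimately show ?thesis
    unfolding Xset_iff using w(2,3) ra
    by (intro exI[of _ "u+a"] exI[of _ v] conjI) auto
qed

lemma Xset_eq_rows_below_highest: "Xset D (r,c) = Xset (rows_below D a) (r-a,c)"
  using Xset_subset_rows_below_highest Xset_rows_below_subset_highest by blast

lemma bracket_cols_left_of_highest:
  assumes "x \<in> Xset D (r,c)" and "k \<in> bracket_cols (col (r,c)) x"
  shows "k < int b - int a"
proof -
  have "x \<in> Xset (rows_below D a) (r-a,c)"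
    using assms(1) Xset_eq_rows_below_highest by simp
  then obtain u v where "removable (rows_below D a) (u,v)" "int v - int u = col (r-a,c) + x"
    unfolding Xset_iff by blast
  moreover from this have "0 < u" "(u+a,v) \<in> D"
    using removable_iff[OF is_partition_rows_below[OF P]] by auto
  ultimately have "col (r,c) + x < int b - int a"
    using Ht ra by fastforce
  then show ?thesis
    using assms(2) ra addable_col_le_highest by (auto simp: mem_bracket_cols)
qed

lemma F_bracket_split_at_highest:
  assumes x: "x \<in> Xset D (r,c)"
  shows "F (bracket D (col (r,c)) x)
    = ((a+b) choose a) * F (bracket (rows_below D a) (col (r-a,c)) x) * F (cols_right D b)"
proof -
  define E where "E = bracket D (col (r,c)) x"
  have PE: "is_partition E"
    unfolding E_def by (rule is_partition_bracket[OF P A x])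
  have "(a,b) \<in> E"
    unfolding E_def mem_bracket[OF P] using top bracket_cols_left_of_highest[OF x] by force
  moreover have "\<forall>p\<in>E. ht p \<le> a + b"
    using Ht bracket_subset unfolding E_def by blast
  ultimately have "F E = ((a+b) choose a) * F (rows_below E a) * F (cols_right E b)"
    by (rule F_eq_at_highest[OF PE])
  moreover have "rows_below E a = bracket (rows_below D a) (col (r-a,c)) x"
    unfolding E_def rows_below_bracket[OF P] using ra by (simp add: algebra_simps)
  moreover have "cols_right E b = cols_right D b"
    unfolding E_def cols_right_bracket[OF P]
  proof (rule bracket_eq_self[OF is_partition_cols_right[OF P]])
    fix u v
    assume "(u,v) \<in> cols_right D b"
    then have "- int a < int v - int u"
      using ht_cols_right_le[OF Ht, of "(u,v)" b] by simp
    show "int v - int u \<notin> bracket_cols (col (r,c) - int b) x"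
    proof
      assume "int v - int u \<in> bracket_cols (col (r,c) - int b) x"
      then have "int v - int u + int b \<in> bracket_cols (col (r,c)) x"
        by (auto simp: mem_bracket_cols)
      then show False
        using bracket_cols_left_of_highest[OF x] \<open>- int a < int v - int u\<close> by fastforce
    qed
  qed
  ultimately show ?thesis
    unfolding E_def by simp
qed

lemma F_insert_split_at_highest:
  "F (insert (r,c) D) = ((a+b) choose a) * F (insert (r-a,c) (rows_below D a)) * F (cols_right D b)"
proof -
  have "F (insert (r,c) D)
      = ((a+b) choose a) * F (rows_below (insert (r,c) D) a) * F (cols_right (insert (r,c) D) b)"
    by (rule F_eq_at_highest) (use A Ht hl top in \<open>auto simp: addable_def\<close>)
  moreover have "rows_below (insert (r,c) D) a = insert (r-a,c) (rows_below D a)"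
    using ra by (intro pair_set_eqI) auto
  moreover have "cols_right (insert (r,c) D) b = cols_right D b"
    using addable_col_le_highest by (intro pair_set_eqI) auto
  ultimately show ?thesis
    by simp
qed

lemma bracket_identity_rows_below_highest:
  assumes IH: "bracket_identity (rows_below D a) (r-a,c)"
  shows "bracket_identity D (r,c)"
proof -
  let ?B = "rows_below D a"
  define K where "K = (a+b) choose a"
  have "(\<Sum>x\<in>Xset D (r,c). F (bracket D (col (r,c)) x))
      = K * F (cols_right D b) * (\<Sum>x\<in>Xset ?B (r-a,c). F (bracket ?B (col (r-a,c)) x))"
    unfolding sum_distrib_left Xset_eq_rows_below_highest K_def
    using F_bracket_split_at_highest Xset_eq_rows_below_highest by (simp add: mult_ac)
  then have "F (insert (r,c) D) + (\<Sum>x\<in>Xset D (r,c). F (bracket D (col (r,c)) x))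
      = K * F (cols_right D b) * (F (insert (r-a,c) ?B) + (\<Sum>x\<in>Xset ?B (r-a,c). F (bracket ?B (col (r-a,c)) x)))"
    unfolding F_insert_split_at_highest K_def by (simp add: algebra_simps)
  also have "\<dots> = 2 * F D"
    using IH F_eq_at_highest[OF P top Ht] unfolding bracket_identity_def K_def by (simp add: mult_ac)
  finally show ?thesis
    unfolding bracket_identity_def .
qed

end

lemma addable_rows_below:
  assumes P: "is_partition D" and "addable D (r,c)" and "a < r"
  shows "addable (rows_below D a) (r-a,c)"
  using assms by (auto simp: addable_iff[OF P] addable_iff[OF is_partition_rows_below[OF P]])

lemma bracket_identity_conjugate:
  assumes P: "is_partition D" and A: "addable D (r,c)"
  shows "bracket_identity (conjugate D) (c,r) \<longleftrightarrow> bracket_identity D (r,c)"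
proof -
  have "F (insert (c,r) (conjugate D)) = F (insert (r,c) D)"
    using F_conjugate[of "insert (r,c) D"] A unfolding conjugate_insert addable_def by simp
  then show ?thesis
    unfolding bracket_identity_def F_conjugate[OF P]
    using sum_bracket_conjugate[OF P A, of "\<lambda>_. True"] by simp
qed

lemma bracket_identity_below_highest:
  assumes P: "is_partition D" and A: "addable D (r,c)"
    and top: "(a,b) \<in> D" and Ht: "\<forall>p\<in>D. ht p \<le> a + b" and hl: "r + c \<le> a + b"
    and IH: "\<And>D' l'. card D' < card D \<Longrightarrow> is_partition D' \<Longrightarrow> addable D' l' \<Longrightarrow> bracket_identity D' l'"
  shows "bracket_identity D (r,c)"
proof -
  have "a < r \<or> b < c"
  proof (rule ccontr)
    assume "\<not> (a < r \<or> b < c)"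
    then have "(r,c) \<in> D"
      using is_partition_downward_closed[OF P top, of r c] A by (auto simp: addable_iff[OF P])
    then show False
      using A by (simp add: addable_def)
  qed
  then show ?thesis
  proof
    assume "a < r"
    then show ?thesis
      using bracket_identity_rows_below_highest[OF P A top Ht hl] IH
        card_rows_below_less[OF is_partition_finite[OF P] top] is_partition_rows_below[OF P]
        addable_rows_below[OF P A] by blast
  next
    assume "b < c"
    let ?C = "conjugate D"
    have PC: "is_partition ?C" and AC: "addable ?C (c,r)" and topC: "(b,a) \<in> ?C"
      and HtC: "\<forall>p\<in>?C. ht p \<le> b + a" and hlC: "c + r \<le> b + a"
      using is_partition_conjugate[OF P] addable_conjugate[OF P] A top ht_conjugate_le[OF Ht] hl
      by (simp_all add: add.commute)
    have "card (rows_below ?C b) < card D"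
      using card_rows_below_less[OF is_partition_finite[OF PC] topC] card_conjugate by simp
    then have "bracket_identity (rows_below ?C b) (c-b,r)"
      using IH is_partition_rows_below[OF PC] addable_rows_below[OF PC AC \<open>b < c\<close>] by blast
    then have "bracket_identity ?C (c,r)"
      by (rule bracket_identity_rows_below_highest[OF PC AC topC HtC hlC \<open>b < c\<close>])
    then show ?thesis
      using bracket_identity_conjugate[OF P A] by simp
  qed
qed

theorem proposition5p13:
  fixes D :: "node set" and l :: node and j :: int
  assumes "is_partition D"
    and "addable D l"
    and "col l = j"
  shows "F (insert l D) + (\<Sum>x\<in>Xset D l. F (bracket D j x)) = 2 * F D"
proof -
  have "bracket_identity D l"
    using assms(1,2)
  proof (induction "card D" arbitrary: D l rule: less_induct)
    case less
    obtain r c where l: "l = (r,c)"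
      by (cases l)
    note P = less.prems(1) and A = less.prems(2)[unfolded l]
    show ?case
    proof (cases "\<forall>p\<in>D. ht p < r + c")
      case True
      then show ?thesis
        unfolding l by (rule bracket_identity_if_all_lower[OF P A])
    next
      case False
      then have "D \<noteq> {}"
        by auto
      obtain a b where ab: "top_node D = (a,b)"
        by (cases "top_node D")
      then have top: "(a,b) \<in> D" and Ht: "\<forall>p\<in>D. ht p \<le> a + b"
        using top_node_prop[OF is_partition_finite[OF P] \<open>D \<noteq> {}\<close>] by auto
      moreover have "r + c \<le> a + b"
        using False Ht by (meson le_trans not_less)
      ultimately show ?thesis
        unfolding l using bracket_identity_below_highest[OF P A] less.hyps by blast
    qed
  qed
  then show ?thesis
    unfolding bracket_identity_def using assms(3) by simp
qed

end
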